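(* Let $T[1..n]$ be a text and $\tau\ge1$ an integer. Suppose the first $i-1$ factors of the LZ-End+$\tau$ factorization of $T$ have been determined and the next factor starts at position $s_i$. If the $\tau$-far property holds for an index $j>s_i$, then it holds for $j-1$.
   Context: LZ-End+$\tau$ factorization: processed left to right starting with $i=1$. If $T[i]$ does not occur in $T[1..i-1]$, make $T[i]$ a new factor and set $i\gets i+1$. Otherwise, let $j$ be the largest index such that $T[i..j]$ has an earlier occurrence $T[k-(j-i)..k]=T[i..j]$ with $k<i$ where either $k$ is the last position of an earlier factor or $k-1\equiv 0\pmod\tau$; make $T[i..j]$ the next factor and set $i\gets j+1$. Potential factor: $T[s_i..h]$ is a potential factor if either $h=s_i$ and $T[s_i]$ is the leftmost occurrence of its symbol in $T$, or $T[s_i..h]=T[x..y]$ for some $x\le y<s_i$ such that $y$ is the last position of one of the already determined factors or $y-1\equiv 0\pmod\tau$. $\tau$-far property: it holds for an index $j\ge s_i$ if there exists $h$ with $s_i\le h$ and $j-\tau\le h\le j$ such that $T[s_i..h]$ is a potential factor. *)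

theory Defs
  imports Main
begin

text \<open>Texts are lists; positions are 1-indexed: position p of T is T ! (p - 1).\<close>

definition sub :: "'a list \<Rightarrow> nat \<Rightarrow> nat \<Rightarrow> 'a list" where
  "sub T a b = map (\<lambda>p. T ! (p - 1)) [a..<Suc b]"

definition next_end :: "'a list \<Rightarrow> nat \<Rightarrow> nat set \<Rightarrow> nat \<Rightarrow> nat" where
  "next_end T tau E i =
     (if (\<forall>p. 1 \<le> p \<and> p < i \<longrightarrow> T ! (p - 1) \<noteq> T ! (i - 1)) then i
      else (GREATEST j. i \<le> j \<and> j \<le> length T \<and>
              (\<exists>k. k < i \<and> j - i < k \<and> (k \<in> E \<or> (k - 1) mod tau = 0) \<and>
                   sub T i j = sub T (k - (j - i)) k)))"

fun lz_ends :: "'a list \<Rightarrow> nat \<Rightarrow> nat \<Rightarrow> nat list" where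
  "lz_ends T tau 0 = []"
| "lz_ends T tau (Suc m) =
     (let es = lz_ends T tau m;
          i = (if es = [] then 1 else last es + 1)
      in es @ [next_end T tau (set es) i])"

definition lz_start :: "'a list \<Rightarrow> nat \<Rightarrow> nat \<Rightarrow> nat" where
  "lz_start T tau m = (let es = lz_ends T tau m in if es = [] then 1 else last es + 1)"

definition potential_factor :: "'a list \<Rightarrow> nat \<Rightarrow> nat set \<Rightarrow> nat \<Rightarrow> nat \<Rightarrow> bool" where
  "potential_factor T tau E s h \<longleftrightarrow>
     (h = s \<and> 1 \<le> s \<and> s \<le> length T \<and> (\<forall>p. 1 \<le> p \<and> p < s \<longrightarrow> T ! (p - 1) \<noteq> T ! (s - 1)))
   \<or> (\<exists>x y. 1 \<le> x \<and> x \<le> y \<and> y < s \<and> s \<le> h \<and> h \<le> length T \<and>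
        sub T s h = sub T x y \<and> (y \<in> E \<or> (y - 1) mod tau = 0))"

definition tau_far :: "'a list \<Rightarrow> nat \<Rightarrow> nat set \<Rightarrow> nat \<Rightarrow> nat \<Rightarrow> bool" where
  "tau_far T tau E s j \<longleftrightarrow>
     (\<exists>h. s \<le> h \<and> j - tau \<le> h \<and> h \<le> j \<and> potential_factor T tau E s h)"

end

theory Submission
  imports Defs
begin

text \<open>Suppose T[s..j] is a potential factor, a copy of some T[x..y] with y < s. Cutting the
  source back to the last sampled position y' \<ge> y - tau (one with (y' - 1) mod tau = 0),
  the matching prefix T[s..j - (y - y')] is again a potential factor, and it ends within tau
  of j - 1. If the source is too short for that cut, then j - s < tau and T[s..s] is itself
  a potential factor: the leftmost occurrence of the symbol T[s] is a factor of length one,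
  hence the end of a factor.\<close>

definition leftmost_occurrence :: "'a list \<Rightarrow> nat \<Rightarrow> bool" where
  "leftmost_occurrence T p \<longleftrightarrow> (\<forall>q. 1 \<le> q \<and> q < p \<longrightarrow> T ! (q - 1) \<noteq> T ! (p - 1))"

lemma length_sub [simp]: "length (sub T a b) = Suc b - a"
  by (auto simp add: sub_def)

lemma nth_sub: "t < Suc b - a \<Longrightarrow> sub T a b ! t = T ! (a + t - 1)"
  unfolding sub_def by (simp del: upt_Suc)

lemma sub_single [simp]: "sub T a a = [T ! (a - 1)]"
  by (simp add: sub_def)

lemma take_sub: "b' \<le> b \<Longrightarrow> take (Suc b' - a) (sub T a b) = sub T a b'"
  unfolding sub_def by (cases "a \<le> Suc b'") (simp_all del: upt_Suc add: take_map)

lemma sub_prefix: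
  assumes "sub T a b = sub T c d" "a \<le> b'" "b' \<le> b"
  shows "sub T a b' = sub T c (c + (b' - a))"
proof -
  have "Suc b - a = Suc d - c"
    using arg_cong[OF assms(1), of length] by simp
  then have "c + (b' - a) \<le> d" and "Suc (c + (b' - a)) - c = Suc b' - a"
    using assms(2,3) by linarith+
  then show ?thesis
    using take_sub[where T = T and a = a, OF assms(3)] take_sub[where T = T and a = c and b = d]
      assms(1) by metis
qed

lemma leftmost_occurrence_exists:
  assumes "1 \<le> q"
  obtains p where "1 \<le> p" "p \<le> q" "T ! (p - 1) = T ! (q - 1)" "leftmost_occurrence T p"
proof -
  define P where "P r \<longleftrightarrow> 1 \<le> r \<and> T ! (r - 1) = T ! (q - 1)" for r
  have "P q"
    using assms by (simp add: P_def)
  then have "P (Least P)" and "Least P \<le> q"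
    by (auto intro: LeastI Least_le)
  moreover have "leftmost_occurrence T (Least P)"
    unfolding leftmost_occurrence_def
    using \<open>P (Least P)\<close> not_less_Least by (fastforce simp: P_def)
  ultimately show ?thesis
    using that unfolding P_def by blast
qed

lemma copy_not_leftmost_occurrence:
  assumes "sub T i j = sub T (k - (j - i)) k" "j - i < k" "k < i" "i \<le> p" "p \<le> j"
  shows "\<not> leftmost_occurrence T p"
proof -
  define q where "q = k - (j - i) + (p - i)"
  have "p - i < Suc j - i"
    using assms(4,5) by linarith
  then have "sub T i j ! (p - i) = sub T (k - (j - i)) k ! (p - i)"
    using assms(1) by simp
  moreover have "p - i < Suc k - (k - (j - i))"
    using assms(2,4,5) by linarith
  ultimately have "T ! (p - 1) = T ! (q - 1)"
    using \<open>p - i < Suc j - i\<close> assms(4) by (simp add: nth_sub q_def)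
  moreover have "1 \<le> q" "q < p"
    using assms(2-5) unfolding q_def by linarith+
  ultimately show ?thesis
    unfolding leftmost_occurrence_def by metis
qed

lemma next_end_copy:
  fixes tau :: nat
  assumes "i \<le> length T" "q \<in> E" "1 \<le> q" "q < i" "T ! (q - 1) = T ! (i - 1)"
  defines "e \<equiv> next_end T tau E i"
  shows "\<exists>k. k < i \<and> e - i < k \<and> sub T i e = sub T (k - (e - i)) k"
proof -
  define P where "P j \<longleftrightarrow> i \<le> j \<and> j \<le> length T \<and>
      (\<exists>k. k < i \<and> j - i < k \<and> (k \<in> E \<or> (k - 1) mod tau = 0) \<and>
           sub T i j = sub T (k - (j - i)) k)" for j
  have "\<not> leftmost_occurrence T i"
    unfolding leftmost_occurrence_def using assms(3-5) by blast
  then have "e = (GREATEST j. P j)"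
    unfolding e_def next_end_def P_def leftmost_occurrence_def[symmetric] by (rule if_not_P)
  moreover have "P i"
    unfolding P_def using assms(1-5) by (intro conjI order_refl exI[of _ q]) auto
  moreover have "\<forall>j. P j \<longrightarrow> j \<le> length T"
    by (simp add: P_def)
  ultimately have "P e"
    using GreatestI_nat by metis
  then show ?thesis
    unfolding P_def by blast
qed

lemma leftmost_occurrence_in_lz_ends:
  assumes "1 \<le> p" "p < lz_start T tau m" "p \<le> length T" "leftmost_occurrence T p"
  shows "p \<in> set (lz_ends T tau m)"
  using assms
proof (induction m arbitrary: p)
  case 0
  then show ?case
    by (simp add: lz_start_def)
next
  case (Suc m)
  define es where "es = lz_ends T tau m"
  define i where "i = lz_start T tau m"
  define e where "e = next_end T tau (set es) i"
  have ends: "lz_ends T tau (Suc m) = es @ [e]"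
    by (simp add: es_def e_def i_def lz_start_def Let_def)
  have "lz_start T tau (Suc m) = e + 1"
    unfolding lz_start_def Let_def ends by simp
  then have "p \<le> e"
    using Suc.prems(2) by simp
  show ?case
  proof (cases "p < i")
    case True
    then show ?thesis
      using Suc.IH[of p] Suc.prems ends by (simp add: es_def i_def)
  next
    case False
    then have "i \<le> p"
      by simp
    show ?thesis
    proof (cases "leftmost_occurrence T i")
      case True
      then have "e = i"
        unfolding e_def next_end_def leftmost_occurrence_def by simp
      then show ?thesis
        using \<open>i \<le> p\<close> \<open>p \<le> e\<close> ends by simp
    next
      case False
      then obtain q where q: "1 \<le> q" "q < i" "T ! (q - 1) = T ! (i - 1)"
        unfolding leftmost_occurrence_def by blast
      obtain q0 where "1 \<le> q0" "q0 \<le> q" "T ! (q0 - 1) = T ! (q - 1)"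
          "leftmost_occurrence T q0"
        using leftmost_occurrence_exists[OF q(1)] .
      with q have q0: "1 \<le> q0" "q0 < i" "T ! (q0 - 1) = T ! (i - 1)" "leftmost_occurrence T q0"
        by simp_all
      moreover have "q0 \<le> length T"
        using q0(2) \<open>i \<le> p\<close> Suc.prems(3) by linarith
      ultimately have "q0 \<in> set es"
        using Suc.IH[of q0] by (simp add: es_def i_def)
      moreover have "i \<le> length T"
        using \<open>i \<le> p\<close> Suc.prems(3) by linarith
      ultimately obtain k where "k < i" "e - i < k" "sub T i e = sub T (k - (e - i)) k"
        using next_end_copy[OF _ _ q0(1-3)] unfolding e_def by blast
      then have "\<not> leftmost_occurrence T p"
        using copy_not_leftmost_occurrence \<open>i \<le> p\<close> \<open>p \<le> e\<close> by blast
      then show ?thesis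
        using Suc.prems(4) by contradiction
    qed
  qed
qed

lemma sampled_position_below:
  fixes tau y :: nat
  assumes "tau \<ge> 1" "y \<ge> 2"
  obtains y' where "y - tau \<le> y'" "y' < y" "(y' - 1) mod tau = 0"
proof
  let ?y' = "y - 1 - (y - 2) mod tau"
  have "(y - 2) mod tau < tau"
    using assms(1) by simp
  then show "y - tau \<le> ?y'" "?y' < y"
    using assms(2) by auto
  have "?y' - 1 = (y - 2) - (y - 2) mod tau"
    using assms(2) by simp
  then show "(?y' - 1) mod tau = 0"
    by (simp add: minus_mod_eq_mult_div)
qed

lemma potential_factor_prefix:
  assumes "sub T s h = sub T x y" "1 \<le> x" "x \<le> y'" "y' \<le> y" "y < s" "s \<le> h"
    "h \<le> length T" "y' \<in> E \<or> (y' - 1) mod tau = 0"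
  shows "potential_factor T tau E s (s + (y' - x))"
proof -
  have "Suc h - s = Suc y - x"
    using arg_cong[OF assms(1), of length] by simp
  then have "s + (y' - x) \<le> h"
    using assms(3,4) by linarith
  moreover have "sub T s (s + (y' - x)) = sub T x y'"
    using sub_prefix[OF sym[OF assms(1)], of y'] assms(3,4) by simp
  ultimately show ?thesis
    unfolding potential_factor_def using assms by (intro disjI2 exI[of _ x] exI[of _ y']) auto
qed

lemma tau_far_pred_of_potential_factor:
  assumes "tau \<ge> 1" "s < j" "potential_factor T tau E s j"
    and leftmost_in_E: "\<And>p. 1 \<le> p \<Longrightarrow> p < s \<Longrightarrow> leftmost_occurrence T p \<Longrightarrow> p \<in> E"
  shows "tau_far T tau E s (j - 1)"
proof -
  obtain x y where xy: "1 \<le> x" "x \<le> y" "y < s" "j \<le> length T" "sub T s j = sub T x y"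
      "y \<in> E \<or> (y - 1) mod tau = 0"
    using assms(2,3) unfolding potential_factor_def by auto
  have "Suc j - s = Suc y - x"
    using arg_cong[OF xy(5), of length] by simp
  then have len: "y - x = j - s"
    using xy(2) assms(2) by linarith
  moreover have "y \<ge> 2"
    using xy(1) len assms(2) by linarith
  ultimately obtain y' where y': "y - tau \<le> y'" "y' < y" "(y' - 1) mod tau = 0"
    using sampled_position_below[OF assms(1)] by blast
  show ?thesis
  proof (cases "x \<le> y'")
    case True
    then have "potential_factor T tau E s (s + (y' - x))"
      using potential_factor_prefix[OF xy(5,1)] xy y' assms(2) by simp
    then show ?thesis
      unfolding tau_far_def using True y' len assms(2) by (intro exI[of _ "s + (y' - x)"]) auto
  next
    case False
    have "sub T s j ! 0 = sub T x y ! 0"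
      by (simp add: xy(5))
    then have "T ! (x - 1) = T ! (s - 1)"
      using nth_sub[of 0 j s T] nth_sub[of 0 y x T] xy(2) assms(2) by simp
    then obtain p where "1 \<le> p" "p \<le> x" "T ! (p - 1) = T ! (s - 1)" "leftmost_occurrence T p"
      using leftmost_occurrence_exists[OF xy(1), of T] by metis
    moreover have "p \<in> E"
      using leftmost_in_E calculation xy(2,3) by simp
    ultimately have "potential_factor T tau E s s"
      unfolding potential_factor_def using xy assms(2) by (intro disjI2 exI[of _ p]) auto
    then show ?thesis
      unfolding tau_far_def using False y' len assms(2) by (intro exI[of _ s]) auto
  qed
qed

lemma tau_far_pred:
  assumes "tau \<ge> 1" "s < j" "tau_far T tau E s j"
    and "\<And>p. 1 \<le> p \<Longrightarrow> p < s \<Longrightarrow> leftmost_occurrence T p \<Longrightarrow> p \<in> E"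
  shows "tau_far T tau E s (j - 1)"
proof -
  obtain h where h: "s \<le> h" "j - tau \<le> h" "h \<le> j" "potential_factor T tau E s h"
    using assms(3) unfolding tau_far_def by blast
  show ?thesis
  proof (cases "h = j")
    case True
    then show ?thesis
      using tau_far_pred_of_potential_factor assms h(4) by blast
  next
    case False
    then show ?thesis
      unfolding tau_far_def using h by (intro exI[of _ h]) auto
  qed
qed

theorem lemma4:
  fixes T :: "'a list" and tau i j :: nat
  assumes "tau \<ge> 1" and "i \<ge> 1"
    and "lz_start T tau (i - 1) \<le> length T"
    and "j > lz_start T tau (i - 1)"
    and "tau_far T tau (set (lz_ends T tau (i - 1))) (lz_start T tau (i - 1)) j"
  shows "tau_far T tau (set (lz_ends T tau (i - 1))) (lz_start T tau (i - 1)) (j - 1)"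
proof -
  have "p \<in> set (lz_ends T tau (i - 1))"
    if "1 \<le> p" "p < lz_start T tau (i - 1)" "leftmost_occurrence T p" for p
  proof (rule leftmost_occurrence_in_lz_ends)
    show "p \<le> length T"
      using that(2) assms(3) by linarith
  qed (use that in auto)
  then show ?thesis
    using tau_far_pred assms(1,4,5) by blast
qed

end
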